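(* Let $(V,c)$ be a braided vector space (i.e. $c\in GL(V\otimes V)$ satisfies $(c\otimes \mathrm{Id})(\mathrm{Id}\otimes c)(c\otimes \mathrm{Id})=(\mathrm{Id}\otimes c)(c\otimes \mathrm{Id})(\mathrm{Id}\otimes c)$) which is of left group-type (resp. right group-type) with respect to an ordered basis $[x_1,\ldots,x_m]$ of $V$, and define $S\in GL(V\otimes V)$ by $S(x_i\otimes x_j)=x_j\otimes x_i$. Then for every $n\ge 2$ the assignment $\sigma_i\mapsto \mathrm{Id}_V^{\otimes i-1}\otimes c\otimes \mathrm{Id}_V^{\otimes n-i-1}$, $s_i\mapsto \mathrm{Id}_V^{\otimes i-1}\otimes S\otimes \mathrm{Id}_V^{\otimes n-i-1}$ ($1\le i\le n-1$) defines a representation of $OLB_n$ (resp. of $LB_n$) on $V^{\otimes n}$; that is, $(V,c,S)$ is a loop braided vector space.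
   Context: $(V,c)$ is of left group-type w.r.t. $[x_1,\ldots,x_m]$ if there are $g_i\in GL(V)$ with $c(x_i\otimes z)=g_i(z)\otimes x_i$ for all $i$, $z\in V$; of right group-type if there are $g_j\in GL(V)$ with $c(z\otimes x_j)=x_j\otimes g_j(z)$ for all $j$, $z\in V$. The loop braid group $LB_n$ is the group generated by $\sigma_i,s_i$ ($1\le i\le n-1$) subject to: $\sigma_i\sigma_{i+1}\sigma_i=\sigma_{i+1}\sigma_i\sigma_{i+1}$; $\sigma_i\sigma_j=\sigma_j\sigma_i$ for $|i-j|>1$; $s_is_{i+1}s_i=s_{i+1}s_is_{i+1}$; $s_is_j=s_js_i$ for $|i-j|>1$; $s_i^2=1$; $\sigma_is_j=s_j\sigma_i$ for $|i-j|>1$; (L1) $s_is_{i+1}\sigma_i=\sigma_{i+1}s_is_{i+1}$; (L2) $\sigma_i\sigma_{i+1}s_i=s_{i+1}\sigma_i\sigma_{i+1}$. The group $OLB_n$ has the same generators and relations except that (L2) is replaced by (L3) $s_i\sigma_{i+1}\sigma_i=\sigma_{i+1}\sigma_is_{i+1}$. A triple $(V,c,S)$ with $S\in GL(V\otimes V)$ is called a loop braided vector space if the local assignment in the claim defines a representation of $LB_n$ or $OLB_n$. *)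

theory Defs
  imports Main
begin

(* Coordinates: V has ordered basis x_b (b :: 'b, 'b finite), so V = ('b => 'k),
   V (x) V = ('b * 'b => 'k), and V^{(x) n} = functions on words of length n
   (coordinate of x_{w_1} (x) ... (x) x_{w_n}), extended by 0 on other words. *)

definition basis_vec :: "'b \<Rightarrow> ('b \<Rightarrow> 'k::field)" where
  "basis_vec i = (\<lambda>j. if j = i then 1 else 0)"

definition tens :: "('b \<Rightarrow> 'k::field) \<Rightarrow> ('b \<Rightarrow> 'k) \<Rightarrow> ('b \<times> 'b \<Rightarrow> 'k)" where
  "tens u v = (\<lambda>(a, b). u a * v b)"

definition is_lin :: "(('a \<Rightarrow> 'k::field) \<Rightarrow> ('c \<Rightarrow> 'k)) \<Rightarrow> bool" where
  "is_lin f \<longleftrightarrow> (\<forall>u v. f (\<lambda>x. u x + v x) = (\<lambda>y. f u y + f v y))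
               \<and> (\<forall>r u. f (\<lambda>x. r * u x) = (\<lambda>y. r * f u y))"

definition is_GL :: "(('a \<Rightarrow> 'k::field) \<Rightarrow> ('a \<Rightarrow> 'k)) \<Rightarrow> bool" where
  "is_GL f \<longleftrightarrow> is_lin f \<and> bij f"

definition flip :: "('b \<times> 'b \<Rightarrow> 'k::field) \<Rightarrow> ('b \<times> 'b \<Rightarrow> 'k)" where
  "flip v = (\<lambda>(a, b). v (b, a))"

definition tpow :: "nat \<Rightarrow> ('b list \<Rightarrow> 'k::field) set" where
  "tpow n = {v. \<forall>w. length w \<noteq> n \<longrightarrow> v w = 0}"

(* ext n i f = Id^{(x) i} (x) f (x) Id^{(x) n-i-2} on V^{(x) n}, f acting on positions i, i+1
   (0-based) *)
definition ext :: "nat \<Rightarrow> nat \<Rightarrow> (('b::finite \<times> 'b \<Rightarrow> 'k::field) \<Rightarrow> ('b \<times> 'b \<Rightarrow> 'k))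
                   \<Rightarrow> ('b list \<Rightarrow> 'k) \<Rightarrow> ('b list \<Rightarrow> 'k)" where
  "ext n i f v w =
     (if length w = n \<and> Suc i < n then
        (\<Sum>a\<in>UNIV. \<Sum>b\<in>UNIV. f (tens (basis_vec a) (basis_vec b)) (w ! i, w ! Suc i)
                                  * v (w[i := a, Suc i := b]))
      else 0)"

definition braided :: "(('b::finite \<times> 'b \<Rightarrow> 'k::field) \<Rightarrow> ('b \<times> 'b \<Rightarrow> 'k)) \<Rightarrow> bool" where
  "braided c \<longleftrightarrow> is_GL c \<and>
     (\<forall>v\<in>tpow 3. ext 3 0 c (ext 3 1 c (ext 3 0 c v)) = ext 3 1 c (ext 3 0 c (ext 3 1 c v)))"

definition left_group_type :: "(('b::finite \<times> 'b \<Rightarrow> 'k::field) \<Rightarrow> ('b \<times> 'b \<Rightarrow> 'k)) \<Rightarrow> bool" where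
  "left_group_type c \<longleftrightarrow> (\<exists>g. (\<forall>i. is_GL (g i)) \<and>
     (\<forall>i z. c (tens (basis_vec i) z) = tens (g i z) (basis_vec i)))"

definition right_group_type :: "(('b::finite \<times> 'b \<Rightarrow> 'k::field) \<Rightarrow> ('b \<times> 'b \<Rightarrow> 'k)) \<Rightarrow> bool" where
  "right_group_type c \<longleftrightarrow> (\<exists>g. (\<forall>j. is_GL (g j)) \<and>
     (\<forall>j z. c (tens z (basis_vec j)) = tens (basis_vec j) (g j z)))"

definition op_eq :: "nat \<Rightarrow> (('b list \<Rightarrow> 'k::field) \<Rightarrow> ('b list \<Rightarrow> 'k))
                      \<Rightarrow> (('b list \<Rightarrow> 'k) \<Rightarrow> ('b list \<Rightarrow> 'k)) \<Rightarrow> bool" where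
  "op_eq n A B \<longleftrightarrow> (\<forall>v\<in>tpow n. A v = B v)"

(* the images of the generators sigma_i, s_i (1 <= i <= n-1) are invertible linear operators
   on V^{(x) n} satisfying the relations common to LB_n and OLB_n, plus (L1) *)
definition common_rels :: "nat \<Rightarrow> (nat \<Rightarrow> ('b list \<Rightarrow> 'k::field) \<Rightarrow> ('b list \<Rightarrow> 'k))
                           \<Rightarrow> (nat \<Rightarrow> ('b list \<Rightarrow> 'k) \<Rightarrow> ('b list \<Rightarrow> 'k)) \<Rightarrow> bool" where
  "common_rels n \<sigma> s \<longleftrightarrow>
     (\<forall>i. 1 \<le> i \<and> i \<le> n - 1 \<longrightarrow>
        (\<forall>u v. u \<in> tpow n \<longrightarrow> v \<in> tpow n \<longrightarrow> \<sigma> i (\<lambda>x. u x + v x) = (\<lambda>y. \<sigma> i u y + \<sigma> i v y)) \<and>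
        (\<forall>r u. u \<in> tpow n \<longrightarrow> \<sigma> i (\<lambda>x. r * u x) = (\<lambda>y. r * \<sigma> i u y)) \<and>
        (\<forall>u v. u \<in> tpow n \<longrightarrow> v \<in> tpow n \<longrightarrow> s i (\<lambda>x. u x + v x) = (\<lambda>y. s i u y + s i v y)) \<and>
        (\<forall>r u. u \<in> tpow n \<longrightarrow> s i (\<lambda>x. r * u x) = (\<lambda>y. r * s i u y)) \<and>
        bij_betw (\<sigma> i) (tpow n) (tpow n) \<and> bij_betw (s i) (tpow n) (tpow n)) \<and>
     (\<forall>i. 1 \<le> i \<and> i + 1 \<le> n - 1 \<longrightarrow>
        op_eq n (\<sigma> i \<circ> \<sigma> (i+1) \<circ> \<sigma> i) (\<sigma> (i+1) \<circ> \<sigma> i \<circ> \<sigma> (i+1)) \<and>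
        op_eq n (s i \<circ> s (i+1) \<circ> s i) (s (i+1) \<circ> s i \<circ> s (i+1)) \<and>
        op_eq n (s i \<circ> s (i+1) \<circ> \<sigma> i) (\<sigma> (i+1) \<circ> s i \<circ> s (i+1))) \<and>
     (\<forall>i j. 1 \<le> i \<and> i \<le> n - 1 \<and> 1 \<le> j \<and> j \<le> n - 1 \<and> (i + 1 < j \<or> j + 1 < i) \<longrightarrow>
        op_eq n (\<sigma> i \<circ> \<sigma> j) (\<sigma> j \<circ> \<sigma> i) \<and>
        op_eq n (s i \<circ> s j) (s j \<circ> s i) \<and>
        op_eq n (\<sigma> i \<circ> s j) (s j \<circ> \<sigma> i)) \<and>
     (\<forall>i. 1 \<le> i \<and> i \<le> n - 1 \<longrightarrow> op_eq n (s i \<circ> s i) id)"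

definition LB_rep :: "nat \<Rightarrow> (nat \<Rightarrow> ('b list \<Rightarrow> 'k::field) \<Rightarrow> ('b list \<Rightarrow> 'k))
                       \<Rightarrow> (nat \<Rightarrow> ('b list \<Rightarrow> 'k) \<Rightarrow> ('b list \<Rightarrow> 'k)) \<Rightarrow> bool" where
  "LB_rep n \<sigma> s \<longleftrightarrow> common_rels n \<sigma> s \<and>
     (\<forall>i. 1 \<le> i \<and> i + 1 \<le> n - 1 \<longrightarrow>
        op_eq n (\<sigma> i \<circ> \<sigma> (i+1) \<circ> s i) (s (i+1) \<circ> \<sigma> i \<circ> \<sigma> (i+1)))"

definition OLB_rep :: "nat \<Rightarrow> (nat \<Rightarrow> ('b list \<Rightarrow> 'k::field) \<Rightarrow> ('b list \<Rightarrow> 'k))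
                       \<Rightarrow> (nat \<Rightarrow> ('b list \<Rightarrow> 'k) \<Rightarrow> ('b list \<Rightarrow> 'k)) \<Rightarrow> bool" where
  "OLB_rep n \<sigma> s \<longleftrightarrow> common_rels n \<sigma> s \<and>
     (\<forall>i. 1 \<le> i \<and> i + 1 \<le> n - 1 \<longrightarrow>
        op_eq n (s i \<circ> \<sigma> (i+1) \<circ> \<sigma> i) (\<sigma> (i+1) \<circ> \<sigma> i \<circ> s (i+1)))"

end

theory Submission
  imports Defs
begin

(* Each defining relation of LB_n and OLB_n involves at most three consecutive tensor
   factors, so it suffices to check it on V^(x)3: freezing the letters of a word outside
   three adjacent positions turns the operators acting there into the corresponding operators
   on V^(x)3.  There, the braid relation for c is the hypothesis, while the relations among
   flips and the mixed relation (L1) hold for every linear c, since the flip only permutes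
   coordinates; far commutativity holds because operators on disjoint factors commute.
   The group-type condition says that in coordinates c u (x, y) = g_y (u (y, -)) (x), so both
   sides of (L3) become g_z applied successively in the two free variables, and these two
   applications commute by linearity (an exchange of finite sums).  The right group-type
   case and (L2) are symmetric. *)

lemma is_lin_add: "is_lin f \<Longrightarrow> f (\<lambda>x. u x + v x) = (\<lambda>y. f u y + f v y)"
  by (simp add: is_lin_def)

lemma is_lin_scale: "is_lin f \<Longrightarrow> f (\<lambda>x. r * u x) = (\<lambda>y. r * f u y)"
  by (simp add: is_lin_def)

lemma is_lin_zero: "is_lin f \<Longrightarrow> f (\<lambda>x. 0) = (\<lambda>y. 0)"
  using is_lin_scale[of f 0] by simp

lemma is_lin_sum:
  assumes "is_lin f" "finite A"
  shows "f (\<lambda>x. \<Sum>a\<in>A. h a x) = (\<lambda>y. \<Sum>a\<in>A. f (h a) y)"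
  using assms(2)
  by induction (simp_all add: is_lin_zero[OF assms(1)] is_lin_add[OF assms(1)])

lemma basis_vec_expansion:
  fixes u :: "'a::finite \<Rightarrow> 'k::field"
  shows "u = (\<lambda>x. \<Sum>a\<in>UNIV. u a * basis_vec a x)"
  by (simp add: fun_eq_iff basis_vec_def if_distrib[of "(*) _"] cong: if_cong)

lemma is_lin_expansion:
  fixes f :: "('a::finite \<Rightarrow> 'k::field) \<Rightarrow> ('c \<Rightarrow> 'k)"
  assumes "is_lin f"
  shows "f u y = (\<Sum>a\<in>UNIV. u a * f (basis_vec a) y)"
proof -
  have "f u = f (\<lambda>x. \<Sum>a\<in>UNIV. u a * basis_vec a x)"
    by (subst basis_vec_expansion) (rule refl)
  also have "\<dots> = (\<lambda>y. \<Sum>a\<in>UNIV. u a * f (basis_vec a) y)"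
    by (subst is_lin_sum[OF assms finite_UNIV]) (simp add: is_lin_scale[OF assms])
  finally show ?thesis by simp
qed

lemma is_lin_swap:
  fixes f :: "('a::finite \<Rightarrow> 'k::field) \<Rightarrow> ('c \<Rightarrow> 'k)"
    and g :: "('b::finite \<Rightarrow> 'k) \<Rightarrow> ('d \<Rightarrow> 'k)"
  assumes f: "is_lin f" and g: "is_lin g"
  shows "f (\<lambda>p. g (\<lambda>q. F p q) y) x = g (\<lambda>q. f (\<lambda>p. F p q) x) y"
proof -
  have "f (\<lambda>p. g (\<lambda>q. F p q) y) x
      = (\<Sum>p\<in>UNIV. (\<Sum>q\<in>UNIV. F p q * g (basis_vec q) y) * f (basis_vec p) x)"
    by (subst is_lin_expansion[OF f]) (subst is_lin_expansion[OF g], rule refl)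
  also have "\<dots> = (\<Sum>q\<in>UNIV. (\<Sum>p\<in>UNIV. F p q * f (basis_vec p) x) * g (basis_vec q) y)"
    unfolding sum_distrib_right by (subst sum.swap) (simp add: mult_ac)
  also have "\<dots> = g (\<lambda>q. f (\<lambda>p. F p q) x) y"
    by (subst (2) is_lin_expansion[OF g]) (subst is_lin_expansion[OF f], rule refl)
  finally show ?thesis .
qed

lemma is_GL_inv:
  assumes "is_GL f"
  shows "is_lin (inv f)" "inv f (f u) = u" "f (inv f u) = u"
proof -
  have bij: "bij f" and lin: "is_lin f"
    using assms by (auto simp: is_GL_def)
  show left: "inv f (f u) = u" for u
    using bij by (simp add: bij_is_inj)
  show right: "f (inv f u) = u" for u
    using bij by (simp add: bij_is_surj surj_f_inv_f)
  have "inv f (\<lambda>x. u x + v x) = (\<lambda>y. inv f u y + inv f v y)" for u v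
  proof -
    have "f (\<lambda>y. inv f u y + inv f v y) = (\<lambda>x. u x + v x)"
      by (simp add: is_lin_add[OF lin] right)
    then show ?thesis
      by (metis left)
  qed
  moreover have "inv f (\<lambda>x. r * u x) = (\<lambda>y. r * inv f u y)" for r u
  proof -
    have "f (\<lambda>y. r * inv f u y) = (\<lambda>x. r * u x)"
      by (simp add: is_lin_scale[OF lin] right)
    then show ?thesis
      by (metis left)
  qed
  ultimately show "is_lin (inv f)"
    by (simp add: is_lin_def)
qed

lemma tens_basis_vec: "tens (basis_vec a) (basis_vec b) = basis_vec (a, b)"
  by (auto simp: tens_def basis_vec_def)

lemma is_lin_flip: "is_lin flip"
  by (auto simp: is_lin_def flip_def fun_eq_iff)

lemma flip_flip: "flip (flip u) = u"
  by (simp add: flip_def)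

lemma ext_apply:
  fixes f :: "('b::finite \<times> 'b \<Rightarrow> 'k::field) \<Rightarrow> ('b \<times> 'b \<Rightarrow> 'k)"
  assumes "is_lin f" "length w = n" "Suc i < n"
  shows "ext n i f v w = f (\<lambda>p. v (w[i := fst p, Suc i := snd p])) (w ! i, w ! Suc i)"
proof -
  have "ext n i f v w
      = (\<Sum>a\<in>UNIV. \<Sum>b\<in>UNIV. v (w[i := a, Suc i := b]) * f (basis_vec (a, b)) (w ! i, w ! Suc i))"
    using assms by (simp add: ext_def tens_basis_vec mult.commute)
  also have "\<dots> = (\<Sum>p\<in>UNIV. v (w[i := fst p, Suc i := snd p]) * f (basis_vec p) (w ! i, w ! Suc i))"
    by (simp only: UNIV_Times_UNIV[symmetric] sum.cartesian_product) (simp add: split_def)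
  also have "\<dots> = f (\<lambda>p. v (w[i := fst p, Suc i := snd p])) (w ! i, w ! Suc i)"
    by (rule is_lin_expansion[OF assms(1), symmetric])
  finally show ?thesis .
qed

lemma ext_outside: "length w \<noteq> n \<Longrightarrow> ext n i f v w = 0"
  by (simp add: ext_def)

lemma ext_in_tpow: "ext n i f v \<in> tpow n"
  by (simp add: tpow_def ext_def)

lemma ext_add: "ext n i f (\<lambda>x. u x + v x) = (\<lambda>y. ext n i f u y + ext n i f v y)"
  by (auto simp: ext_def fun_eq_iff distrib_left sum.distrib)

lemma ext_scale: "ext n i f (\<lambda>x. r * u x) = (\<lambda>y. r * ext n i f u y)"
  by (auto simp: ext_def fun_eq_iff sum_distrib_left mult_ac)

lemma ext_inverse:
  assumes "is_lin f" "is_lin h" "\<And>u. h (f u) = u" "Suc i < n" "v \<in> tpow n"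
  shows "ext n i h (ext n i f v) = v"
proof
  fix w :: "'a list"
  show "ext n i h (ext n i f v) w = v w"
  proof (cases "length w = n")
    case True
    have "w[i := a, Suc i := b, i := a', Suc i := b'] = w[i := a', Suc i := b']" for a b a' b'
      using True assms(4) by (intro nth_equalityI) (auto simp: nth_list_update)
    then have "(\<lambda>p. ext n i f v (w[i := fst p, Suc i := snd p]))
             = f (\<lambda>q. v (w[i := fst q, Suc i := snd q]))"
      using True assms by (auto simp: ext_apply fun_eq_iff)
    then show ?thesis
      using True assms by (simp add: ext_apply)
  next
    case False
    then show ?thesis
      using assms(5) by (simp add: ext_outside tpow_def)
  qed
qed

lemma bij_betw_ext:
  assumes "is_lin f" "is_lin h" "\<And>u. h (f u) = u" "\<And>u. f (h u) = u" "Suc i < n"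
  shows "bij_betw (ext n i f) (tpow n) (tpow n)"
  by (rule bij_betw_byWitness[where f'="ext n i h"])
    (use assms ext_inverse[of f h] ext_inverse[of h f] ext_in_tpow in auto)

lemma ext_commute_disjoint:
  assumes "is_lin f" "is_lin g" "Suc p < q" "Suc q < n"
  shows "ext n p f (ext n q g v) = ext n q g (ext n p f v)"
proof
  fix w :: "'a list"
  show "ext n p f (ext n q g v) w = ext n q g (ext n p f v) w"
  proof (cases "length w = n")
    case True
    have "w[p := a, Suc p := b, q := c, Suc q := d] = w[q := c, Suc q := d, p := a, Suc p := b]"
      for a b c d
      using assms True by (intro nth_equalityI) (auto simp: nth_list_update)
    then show ?thesis
      using True assms by (simp add: ext_apply is_lin_swap[OF assms(1,2)])
  next
    case False
    then show ?thesis by (simp add: ext_outside)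
  qed
qed

definition restrict3 :: "nat \<Rightarrow> 'b list \<Rightarrow> ('b list \<Rightarrow> 'k::field) \<Rightarrow> ('b list \<Rightarrow> 'k)" where
  "restrict3 k w v =
     (\<lambda>u. if length u = 3 then v (w[k := u ! 0, Suc k := u ! 1, Suc (Suc k) := u ! 2]) else 0)"

lemma length3_cases:
  assumes "length u = 3"
  obtains x y z where "u = [x, y, z]"
  using assms by (auto simp: length_Suc_conv numeral_3_eq_3)

lemma restrict3_in_tpow: "restrict3 k w v \<in> tpow 3"
  by (simp add: restrict3_def tpow_def)

lemma restrict3_at:
  "length w = n \<Longrightarrow> Suc (Suc k) < n \<Longrightarrow> restrict3 k w v [w ! k, w ! Suc k, w ! Suc (Suc k)] = v w"
  by (simp add: restrict3_def)

lemma restrict3_ext: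
  fixes f :: "('b::finite \<times> 'b \<Rightarrow> 'k::field) \<Rightarrow> ('b \<times> 'b \<Rightarrow> 'k)"
  assumes "is_lin f" "length w = n" "Suc (Suc k) < n" "j < 2"
  shows "restrict3 k w (ext n (k + j) f v) = ext 3 j f (restrict3 k w v)"
proof
  fix u :: "'b list"
  show "restrict3 k w (ext n (k + j) f v) u = ext 3 j f (restrict3 k w v) u"
  proof (cases "length u = 3")
    case True
    then obtain x y z where u: "u = [x, y, z]"
      by (rule length3_cases)
    consider "j = 0" | "j = 1"
      using assms(4) by linarith
    then show ?thesis
    proof cases
      case 1
      have "w[k := x, Suc k := y, Suc (Suc k) := z, k := a, Suc k := b]
          = w[k := a, Suc k := b, Suc (Suc k) := z]" for a b
        using assms by (intro nth_equalityI) (auto simp: nth_list_update)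
      then show ?thesis
        using assms 1 by (simp add: u restrict3_def ext_apply)
    next
      case 2
      have "w[k := x, Suc k := y, Suc (Suc k) := z, Suc k := a, Suc (Suc k) := b]
          = w[k := x, Suc k := a, Suc (Suc k) := b]" for a b
        using assms by (intro nth_equalityI) (auto simp: nth_list_update)
      then show ?thesis
        using assms 2 by (simp add: u restrict3_def ext_apply)
    qed
  next
    case False
    then show ?thesis by (simp add: restrict3_def ext_outside)
  qed
qed

lemma adjacent_index_cases:
  assumes "1 \<le> i \<and> i + 1 \<le> n - 1"
  obtains k where "i = Suc k" "Suc (Suc k) < n"
  using assms by (intro that[of "i - 1"]) auto

lemma op_eq_lift3:
  fixes f1 f2 f3 g1 g2 g3 :: "('b::finite \<times> 'b \<Rightarrow> 'k::field) \<Rightarrow> ('b \<times> 'b \<Rightarrow> 'k)"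
  assumes lin: "is_lin f1" "is_lin f2" "is_lin f3" "is_lin g1" "is_lin g2" "is_lin g3"
    and pos: "j1 < 2" "j2 < 2" "j3 < 2" "l1 < 2" "l2 < 2" "l3 < 2"
    and k: "Suc (Suc k) < n"
    and rel: "\<And>v. v \<in> tpow 3 \<Longrightarrow>
      ext 3 j1 f1 (ext 3 j2 f2 (ext 3 j3 f3 v)) = ext 3 l1 g1 (ext 3 l2 g2 (ext 3 l3 g3 v))"
  shows "op_eq n (ext n (k + j1) f1 \<circ> ext n (k + j2) f2 \<circ> ext n (k + j3) f3)
                 (ext n (k + l1) g1 \<circ> ext n (k + l2) g2 \<circ> ext n (k + l3) g3)"
  unfolding op_eq_def
proof (intro ballI ext)
  fix v w
  show "(ext n (k + j1) f1 \<circ> ext n (k + j2) f2 \<circ> ext n (k + j3) f3) v w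
      = (ext n (k + l1) g1 \<circ> ext n (k + l2) g2 \<circ> ext n (k + l3) g3) v w"
  proof (cases "length w = n")
    case True
    let ?at = "\<lambda>u. u [w ! k, w ! Suc k, w ! Suc (Suc k)]"
    have "(ext n (k + j1) f1 \<circ> ext n (k + j2) f2 \<circ> ext n (k + j3) f3) v w
        = ?at (restrict3 k w (ext n (k + j1) f1 (ext n (k + j2) f2 (ext n (k + j3) f3 v))))"
      by (simp add: restrict3_at[OF True k])
    also have "\<dots> = ?at (ext 3 j1 f1 (ext 3 j2 f2 (ext 3 j3 f3 (restrict3 k w v))))"
      using True k lin pos by (simp add: restrict3_ext)
    also have "\<dots> = ?at (ext 3 l1 g1 (ext 3 l2 g2 (ext 3 l3 g3 (restrict3 k w v))))"
      by (simp add: rel restrict3_in_tpow)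
    also have "\<dots> = ?at (restrict3 k w (ext n (k + l1) g1 (ext n (k + l2) g2 (ext n (k + l3) g3 v))))"
      using True k lin pos by (simp add: restrict3_ext)
    also have "\<dots> = (ext n (k + l1) g1 \<circ> ext n (k + l2) g2 \<circ> ext n (k + l3) g3) v w"
      by (simp add: restrict3_at[OF True k])
    finally show ?thesis .
  next
    case False
    then show ?thesis by (simp add: ext_outside)
  qed
qed

lemma ext3_apply_0:
  "is_lin f \<Longrightarrow> ext 3 0 f v [x, y, z] = f (\<lambda>p. v [fst p, snd p, z]) (x, y)"
  by (simp add: ext_apply)

(* Stated with Suc 0, the simp normal form of the position 1. *)
lemma ext3_apply_1:
  "is_lin f \<Longrightarrow> ext 3 (Suc 0) f v [x, y, z] = f (\<lambda>p. v [x, fst p, snd p]) (y, z)"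
  by (simp add: ext_apply)

lemma length3_fun_eqI:
  "(\<And>x y z. A [x, y, z] = B [x, y, z]) \<Longrightarrow> (\<And>u. length u \<noteq> 3 \<Longrightarrow> A u = B u) \<Longrightarrow> A = B"
  by (rule ext) (metis length3_cases)

lemma ext3_flip_braid:
  "ext 3 0 flip (ext 3 1 flip (ext 3 0 flip v)) = ext 3 1 flip (ext 3 0 flip (ext 3 1 flip v))"
  by (rule length3_fun_eqI) (simp_all add: ext3_apply_0 ext3_apply_1 is_lin_flip flip_def ext_outside)

lemma ext3_flip_mixed:
  assumes "is_lin c"
  shows "ext 3 0 flip (ext 3 1 flip (ext 3 0 c v)) = ext 3 1 c (ext 3 0 flip (ext 3 1 flip v))"
  by (rule length3_fun_eqI)
    (simp_all add: ext3_apply_0 ext3_apply_1 is_lin_flip flip_def ext_outside assms)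

lemma tens_expansion_left:
  fixes u :: "'b::finite \<times> 'b \<Rightarrow> 'k::field"
  shows "u = (\<lambda>p. \<Sum>a\<in>UNIV. tens (basis_vec a) (\<lambda>b. u (a, b)) p)"
  by (simp add: fun_eq_iff tens_def basis_vec_def if_distrib[of "\<lambda>r. r * _"] if_distrib[of "(*) _"]
      cong: if_cong)

lemma tens_expansion_right:
  fixes u :: "'b::finite \<times> 'b \<Rightarrow> 'k::field"
  shows "u = (\<lambda>p. \<Sum>b\<in>UNIV. tens (\<lambda>a. u (a, b)) (basis_vec b) p)"
  by (simp add: fun_eq_iff tens_def basis_vec_def if_distrib[of "\<lambda>r. r * _"] if_distrib[of "(*) _"]
      cong: if_cong)

lemma left_group_type_apply:
  fixes c :: "('b::finite \<times> 'b \<Rightarrow> 'k::field) \<Rightarrow> ('b \<times> 'b \<Rightarrow> 'k)"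
  assumes "is_lin c" and g: "\<And>i z. c (tens (basis_vec i) z) = tens (g i z) (basis_vec i)"
  shows "c u (x, y) = g y (\<lambda>b. u (y, b)) x"
proof -
  have "c u = c (\<lambda>p. \<Sum>a\<in>UNIV. tens (basis_vec a) (\<lambda>b. u (a, b)) p)"
    by (rule arg_cong[where f = c], rule tens_expansion_left)
  also have "\<dots> = (\<lambda>q. \<Sum>a\<in>UNIV. tens (g a (\<lambda>b. u (a, b))) (basis_vec a) q)"
    by (simp add: is_lin_sum[OF assms(1)] g)
  finally show ?thesis
    by (simp add: tens_def basis_vec_def if_distrib[of "\<lambda>r. r * _"] if_distrib[of "(*) _"]
        cong: if_cong)
qed

lemma right_group_type_apply:
  fixes c :: "('b::finite \<times> 'b \<Rightarrow> 'k::field) \<Rightarrow> ('b \<times> 'b \<Rightarrow> 'k)"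
  assumes "is_lin c" and g: "\<And>j z. c (tens z (basis_vec j)) = tens (basis_vec j) (g j z)"
  shows "c u (x, y) = g x (\<lambda>a. u (a, x)) y"
proof -
  have "c u = c (\<lambda>p. \<Sum>b\<in>UNIV. tens (\<lambda>a. u (a, b)) (basis_vec b) p)"
    by (rule arg_cong[where f = c], rule tens_expansion_right)
  also have "\<dots> = (\<lambda>q. \<Sum>b\<in>UNIV. tens (basis_vec b) (g b (\<lambda>a. u (a, b))) q)"
    by (simp add: is_lin_sum[OF assms(1)] g)
  finally show ?thesis
    by (simp add: tens_def basis_vec_def if_distrib[of "\<lambda>r. r * _"] if_distrib[of "(*) _"]
        cong: if_cong)
qed

lemma ext3_left_group_type_relation:
  fixes c :: "('b::finite \<times> 'b \<Rightarrow> 'k::field) \<Rightarrow> ('b \<times> 'b \<Rightarrow> 'k)"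
  assumes c: "is_lin c" and g: "\<And>i. is_lin (g i)"
    and cg: "\<And>i z. c (tens (basis_vec i) z) = tens (g i z) (basis_vec i)"
  shows "ext 3 0 flip (ext 3 1 c (ext 3 0 c v)) = ext 3 1 c (ext 3 0 c (ext 3 1 flip v))"
proof (rule length3_fun_eqI)
  fix x y z
  have "ext 3 0 flip (ext 3 1 c (ext 3 0 c v)) [x, y, z] = g z (\<lambda>b. g z (\<lambda>q. v [z, q, b]) y) x"
    by (simp add: ext3_apply_0 ext3_apply_1 is_lin_flip flip_def c left_group_type_apply[OF c cg])
  also have "\<dots> = g z (\<lambda>q. g z (\<lambda>b. v [z, q, b]) x) y"
    by (rule is_lin_swap[OF g g])
  also have "\<dots> = ext 3 1 c (ext 3 0 c (ext 3 1 flip v)) [x, y, z]"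
    by (simp add: ext3_apply_0 ext3_apply_1 is_lin_flip flip_def c left_group_type_apply[OF c cg])
  finally show "ext 3 0 flip (ext 3 1 c (ext 3 0 c v)) [x, y, z]
              = ext 3 1 c (ext 3 0 c (ext 3 1 flip v)) [x, y, z]" .
qed (simp add: ext_outside)

lemma ext3_right_group_type_relation:
  fixes c :: "('b::finite \<times> 'b \<Rightarrow> 'k::field) \<Rightarrow> ('b \<times> 'b \<Rightarrow> 'k)"
  assumes c: "is_lin c" and g: "\<And>j. is_lin (g j)"
    and cg: "\<And>j z. c (tens z (basis_vec j)) = tens (basis_vec j) (g j z)"
  shows "ext 3 0 c (ext 3 1 c (ext 3 0 flip v)) = ext 3 1 flip (ext 3 0 c (ext 3 1 c v))"
proof (rule length3_fun_eqI)
  fix x y z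
  have "ext 3 0 c (ext 3 1 c (ext 3 0 flip v)) [x, y, z] = g x (\<lambda>a. g x (\<lambda>b. v [b, a, x]) z) y"
    by (simp add: ext3_apply_0 ext3_apply_1 is_lin_flip flip_def c right_group_type_apply[OF c cg])
  also have "\<dots> = g x (\<lambda>b. g x (\<lambda>a. v [b, a, x]) y) z"
    by (rule is_lin_swap[OF g g])
  also have "\<dots> = ext 3 1 flip (ext 3 0 c (ext 3 1 c v)) [x, y, z]"
    by (simp add: ext3_apply_0 ext3_apply_1 is_lin_flip flip_def c right_group_type_apply[OF c cg])
  finally show "ext 3 0 c (ext 3 1 c (ext 3 0 flip v)) [x, y, z]
              = ext 3 1 flip (ext 3 0 c (ext 3 1 c v)) [x, y, z]" .
qed (simp add: ext_outside)

lemma op_eq_ext_commute: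
  assumes "is_lin f" "is_lin g" "Suc p < q \<or> Suc q < p" "Suc p < n" "Suc q < n"
  shows "op_eq n (ext n p f \<circ> ext n q g) (ext n q g \<circ> ext n p f)"
  using assms ext_commute_disjoint[of f g p q n] ext_commute_disjoint[of g f q p n]
  by (auto simp: op_eq_def)

lemma common_rels_ext:
  fixes c s :: "('b::finite \<times> 'b \<Rightarrow> 'k::field) \<Rightarrow> ('b \<times> 'b \<Rightarrow> 'k)"
  assumes GL: "is_GL c" and s: "is_lin s" and ss: "\<And>u. s (s u) = u"
    and braid_c: "\<And>v. v \<in> tpow 3 \<Longrightarrow>
      ext 3 0 c (ext 3 1 c (ext 3 0 c v)) = ext 3 1 c (ext 3 0 c (ext 3 1 c v))"
    and braid_s: "\<And>v. v \<in> tpow 3 \<Longrightarrow>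
      ext 3 0 s (ext 3 1 s (ext 3 0 s v)) = ext 3 1 s (ext 3 0 s (ext 3 1 s v))"
    and mixed: "\<And>v. v \<in> tpow 3 \<Longrightarrow>
      ext 3 0 s (ext 3 1 s (ext 3 0 c v)) = ext 3 1 c (ext 3 0 s (ext 3 1 s v))"
  shows "common_rels n (\<lambda>i. ext n (i - 1) c) (\<lambda>i. ext n (i - 1) s)"
proof -
  have c: "is_lin c"
    using GL by (simp add: is_GL_def)
  have generator:
    "bij_betw (ext n (i - 1) c) (tpow n) (tpow n) \<and> bij_betw (ext n (i - 1) s) (tpow n) (tpow n)
     \<and> op_eq n (ext n (i - 1) s \<circ> ext n (i - 1) s) id" if "1 \<le> i \<and> i \<le> n - 1" for i
  proof -
    have i: "Suc (i - 1) < n"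
      using that by linarith
    show ?thesis
      using bij_betw_ext[OF c is_GL_inv(1)[OF GL] is_GL_inv(2,3)[OF GL] i]
        bij_betw_ext[OF s s ss ss i] ext_inverse[OF s s ss i]
      by (auto simp: op_eq_def)
  qed
  have adjacent:
    "op_eq n (ext n (i - 1) c \<circ> ext n i c \<circ> ext n (i - 1) c) (ext n i c \<circ> ext n (i - 1) c \<circ> ext n i c)
     \<and> op_eq n (ext n (i - 1) s \<circ> ext n i s \<circ> ext n (i - 1) s) (ext n i s \<circ> ext n (i - 1) s \<circ> ext n i s)
     \<and> op_eq n (ext n (i - 1) s \<circ> ext n i s \<circ> ext n (i - 1) c) (ext n i c \<circ> ext n (i - 1) s \<circ> ext n i s)"
    if bounds: "1 \<le> i \<and> i + 1 \<le> n - 1" for i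
  proof -
    obtain k where i: "i = Suc k" and k: "Suc (Suc k) < n"
      using bounds by (rule adjacent_index_cases)
    show ?thesis
      using op_eq_lift3[OF c c c c c c _ _ _ _ _ _ k, of 0 1 0 1 0 1] braid_c
        op_eq_lift3[OF s s s s s s _ _ _ _ _ _ k, of 0 1 0 1 0 1] braid_s
        op_eq_lift3[OF s s c c s s _ _ _ _ _ _ k, of 0 1 0 1 0 1] mixed
      by (simp add: i)
  qed
  have distant:
    "op_eq n (ext n (i - 1) c \<circ> ext n (j - 1) c) (ext n (j - 1) c \<circ> ext n (i - 1) c)
     \<and> op_eq n (ext n (i - 1) s \<circ> ext n (j - 1) s) (ext n (j - 1) s \<circ> ext n (i - 1) s)
     \<and> op_eq n (ext n (i - 1) c \<circ> ext n (j - 1) s) (ext n (j - 1) s \<circ> ext n (i - 1) c)"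
    if "1 \<le> i \<and> i \<le> n - 1 \<and> 1 \<le> j \<and> j \<le> n - 1 \<and> (i + 1 < j \<or> j + 1 < i)" for i j
  proof -
    have ij: "Suc (i - 1) < j - 1 \<or> Suc (j - 1) < i - 1" "Suc (i - 1) < n" "Suc (j - 1) < n"
      using that by auto
    show ?thesis
      using op_eq_ext_commute[OF c c ij] op_eq_ext_commute[OF s s ij] op_eq_ext_commute[OF c s ij]
      by simp
  qed
  show ?thesis
    unfolding common_rels_def
    using generator adjacent distant by (simp add: ext_add ext_scale)
qed

lemma OLB_rep_ext:
  fixes c s :: "('b::finite \<times> 'b \<Rightarrow> 'k::field) \<Rightarrow> ('b \<times> 'b \<Rightarrow> 'k)"
  assumes "common_rels n (\<lambda>i. ext n (i - 1) c) (\<lambda>i. ext n (i - 1) s)"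
    and c: "is_lin c" and s: "is_lin s"
    and L3: "\<And>v. v \<in> tpow 3 \<Longrightarrow>
      ext 3 0 s (ext 3 1 c (ext 3 0 c v)) = ext 3 1 c (ext 3 0 c (ext 3 1 s v))"
  shows "OLB_rep n (\<lambda>i. ext n (i - 1) c) (\<lambda>i. ext n (i - 1) s)"
  unfolding OLB_rep_def
proof (intro conjI allI impI)
  fix i
  assume "1 \<le> i \<and> i + 1 \<le> n - 1"
  then obtain k where i: "i = Suc k" and k: "Suc (Suc k) < n"
    by (rule adjacent_index_cases)
  show "op_eq n (ext n (i - 1) s \<circ> ext n (i + 1 - 1) c \<circ> ext n (i - 1) c)
                (ext n (i + 1 - 1) c \<circ> ext n (i - 1) c \<circ> ext n (i + 1 - 1) s)"
    using op_eq_lift3[OF s c c c c s _ _ _ _ _ _ k, of 0 1 0 1 0 1] L3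
    by (simp add: i)
qed (rule assms(1))

lemma LB_rep_ext:
  fixes c s :: "('b::finite \<times> 'b \<Rightarrow> 'k::field) \<Rightarrow> ('b \<times> 'b \<Rightarrow> 'k)"
  assumes "common_rels n (\<lambda>i. ext n (i - 1) c) (\<lambda>i. ext n (i - 1) s)"
    and c: "is_lin c" and s: "is_lin s"
    and L2: "\<And>v. v \<in> tpow 3 \<Longrightarrow>
      ext 3 0 c (ext 3 1 c (ext 3 0 s v)) = ext 3 1 s (ext 3 0 c (ext 3 1 c v))"
  shows "LB_rep n (\<lambda>i. ext n (i - 1) c) (\<lambda>i. ext n (i - 1) s)"
  unfolding LB_rep_def
proof (intro conjI allI impI)
  fix i
  assume "1 \<le> i \<and> i + 1 \<le> n - 1"
  then obtain k where i: "i = Suc k" and k: "Suc (Suc k) < n"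
    by (rule adjacent_index_cases)
  show "op_eq n (ext n (i - 1) c \<circ> ext n (i + 1 - 1) c \<circ> ext n (i - 1) s)
                (ext n (i + 1 - 1) s \<circ> ext n (i - 1) c \<circ> ext n (i + 1 - 1) c)"
    using op_eq_lift3[OF c c s s c c _ _ _ _ _ _ k, of 0 1 0 1 0 1] L2
    by (simp add: i)
qed (rule assms(1))

theorem proposition3p3:
  fixes c :: "('b::finite \<times> 'b \<Rightarrow> 'k::field) \<Rightarrow> ('b \<times> 'b \<Rightarrow> 'k)"
  assumes "braided c"
  shows "(left_group_type c \<longrightarrow>
            (\<forall>n\<ge>2. OLB_rep n (\<lambda>i. ext n (i - 1) c) (\<lambda>i. ext n (i - 1) flip)))
       \<and> (right_group_type c \<longrightarrow>
            (\<forall>n\<ge>2. LB_rep n (\<lambda>i. ext n (i - 1) c) (\<lambda>i. ext n (i - 1) flip)))"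
proof -
  have GL: "is_GL c"
    and braid: "\<And>v. v \<in> tpow 3 \<Longrightarrow>
      ext 3 0 c (ext 3 1 c (ext 3 0 c v)) = ext 3 1 c (ext 3 0 c (ext 3 1 c v))"
    using assms by (auto simp: braided_def)
  then have c: "is_lin c"
    by (simp add: is_GL_def)
  have common: "common_rels n (\<lambda>i. ext n (i - 1) c) (\<lambda>i. ext n (i - 1) flip)" for n
    using common_rels_ext[OF GL is_lin_flip flip_flip braid] ext3_flip_braid ext3_flip_mixed[OF c]
    by blast
  show ?thesis
  proof (intro conjI impI allI)
    fix n :: nat
    assume "left_group_type c"
    then obtain g where "\<And>i. is_GL (g i)" and cg: "\<And>i z. c (tens (basis_vec i) z) = tens (g i z) (basis_vec i)"
      unfolding left_group_type_def by blast
    then have "\<And>i. is_lin (g i)"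
      by (simp add: is_GL_def)
    then show "OLB_rep n (\<lambda>i. ext n (i - 1) c) (\<lambda>i. ext n (i - 1) flip)"
      using OLB_rep_ext[OF common c is_lin_flip] ext3_left_group_type_relation[OF c _ cg] by blast
  next
    fix n :: nat
    assume "right_group_type c"
    then obtain g where "\<And>j. is_GL (g j)" and cg: "\<And>j z. c (tens z (basis_vec j)) = tens (basis_vec j) (g j z)"
      unfolding right_group_type_def by blast
    then have "\<And>j. is_lin (g j)"
      by (simp add: is_GL_def)
    then show "LB_rep n (\<lambda>i. ext n (i - 1) c) (\<lambda>i. ext n (i - 1) flip)"
      using LB_rep_ext[OF common c is_lin_flip] ext3_right_group_type_relation[OF c _ cg] by blast
  qed
qed

end
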